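(* Let $n\geqslant 3$, let $S$ be a caterpillar species tree with $n$ leaves, and let $G$ be a caterpillar gene tree on the same label set that differs from $S$ by $k\geqslant 1$ disjoint NNI moves, i.e. the canonical vector of $G$ is obtained from that of $S$ by exchanging the labels within each of $k$ pairwise disjoint position pairs, each pair being of the form $\{m,m+1\}$ with $2\leqslant m\leqslant n-1$ or equal to $\{1,3\}$. Then (i) the roadblock set $B_{G,S}$ consists of $k$ distinct points $(i_1,i_1),\dots,(i_k,i_k)$ with $0<i_1<\cdots<i_k<n-1$; and (ii) the number of coalescent histories for $(G,S)$ equals $$C_{n-1}+\sum_{\ell=1}^{k}(-1)^{\ell}\sum_{1\leqslant j_1<j_2<\cdots<j_\ell\leqslant k} C_{i_{j_1}}\,C_{i_{j_2}-i_{j_1}}\cdots C_{i_{j_\ell}-i_{j_{\ell-1}}}\,C_{n-1-i_{j_\ell}},$$ where $C_m=\frac{1}{m+1}\binom{2m}{m}$.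
   Context: All trees are binary, rooted, leaf-labeled. A caterpillar tree with $n$ leaves is one in which some internal node is descended from all other internal nodes. Its canonical label vector $(x_1,\dots,x_n)$ has $x_1,x_2$ the labels of the two cherry leaves and, for $3\leqslant i\leqslant n$, $x_i$ the label of the leaf separated from the root by $n-i+1$ edges; swapping $x_1,x_2$ gives the same tree. Internal nodes are numbered $1,\dots,n-1$ from cherry to root; internal edge $i$ is the edge above node $i$, with an extra edge $n-1$ above the root. A coalescent history for $(G,S)$ is a map $h$ from internal nodes of $G$ to internal edges of $S$ such that (1) every label of a leaf below node $v$ of $G$ labels a leaf of $S$ below edge $h(v)$, and (2) if $v_2$ is descended from $v_1$ in $G$ then $h(v_2)$ is descended from $h(v_1)$ (objects are descended from themselves). With $\mathbf g,\mathbf s$ the canonical vectors of $G,S$, $\sigma(x)$ the index of $x$ in $\mathbf s$ and $F(j)=\max\{\sigma(g_1),\dots,\sigma(g_{j+1})\}-1$, the roadblock set is $B_{G,S}=\{(i,j)\in\mathbb Z^2:1\leqslant j\leqslant i\leqslant n-1,\ i<F(j)\}$. *)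

theory Defs
  imports Complex_Main "HOL-Library.FuncSet"
begin

text \<open>Caterpillar trees are represented by their canonical label vectors, as lists
  (position p of the paper, 1-based, is list index p-1). Internal nodes and internal
  edges are numbered 1..n-1 from cherry to root.\<close>

text \<open>Set of labels of leaves below internal node v (equivalently below internal edge v)
  of the caterpillar with canonical vector xs: these are x_1,...,x_(v+1).\<close>
definition cat_below :: "'a list \<Rightarrow> nat \<Rightarrow> 'a set" where
  "cat_below xs v = set (take (v + 1) xs)"

text \<open>Coalescent histories for (G,S): maps h from internal nodes {1..n-1} of G to internal
  edges {1..n-1} of S (extensional).  Node v2 is descended from node v1 iff v2 \<le> v1, and
  edge e2 is descended from edge e1 iff e2 \<le> e1.\<close>
definition coal_hist :: "'a list \<Rightarrow> 'a list \<Rightarrow> (nat \<Rightarrow> nat) set" where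
  "coal_hist g s = {h \<in> {1..<length s} \<rightarrow>\<^sub>E {1..<length s}.
      (\<forall>v\<in>{1..<length s}. cat_below g v \<subseteq> cat_below s (h v)) \<and>
      (\<forall>v1\<in>{1..<length s}. \<forall>v2\<in>{1..<length s}. v2 \<le> v1 \<longrightarrow> h v2 \<le> h v1)}"

definition sigma :: "'a list \<Rightarrow> 'a \<Rightarrow> nat" where
  "sigma s x = (THE p. 1 \<le> p \<and> p \<le> length s \<and> s ! (p - 1) = x)"

definition Fmax :: "'a list \<Rightarrow> 'a list \<Rightarrow> nat \<Rightarrow> nat" where
  "Fmax g s j = Max (sigma s ` set (take (j + 1) g)) - 1"

definition roadblock :: "'a list \<Rightarrow> 'a list \<Rightarrow> (nat \<times> nat) set" where
  "roadblock g s = {(i, j). 1 \<le> j \<and> j \<le> i \<and> i \<le> length s - 1 \<and> i < Fmax g s j}"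

definition valid_nni_pairs :: "nat \<Rightarrow> nat set set \<Rightarrow> bool" where
  "valid_nni_pairs n P \<longleftrightarrow> finite P \<and>
     (\<forall>Q\<in>P. (\<exists>m. 2 \<le> m \<and> m \<le> n - 1 \<and> Q = {m, m + 1}) \<or> Q = {1, 3}) \<and>
     (\<forall>Q1\<in>P. \<forall>Q2\<in>P. Q1 \<noteq> Q2 \<longrightarrow> Q1 \<inter> Q2 = {})"

definition swap_pos :: "nat set set \<Rightarrow> nat \<Rightarrow> nat" where
  "swap_pos P p = (if \<exists>Q\<in>P. p \<in> Q then (THE q. \<exists>Q\<in>P. Q = {p, q} \<and> q \<noteq> p) else p)"

definition apply_nni :: "nat set set \<Rightarrow> 'a list \<Rightarrow> 'a list" where
  "apply_nni P s = map (\<lambda>i. s ! (swap_pos P (i + 1) - 1)) [0..<length s]"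

definition catalan :: "nat \<Rightarrow> real" where
  "catalan m = (1 / (real m + 1)) * real ((2 * m) choose m)"

definition chain_prod :: "nat \<Rightarrow> nat list \<Rightarrow> real" where
  "chain_prod n xs = (let ys = 0 # xs @ [n - 1] in
      \<Prod>t < length xs + 1. catalan (ys ! (t + 1) - ys ! t))"

end

theory Submission
  imports Defs
begin

text \<open>For caterpillars, node v of G may be mapped to edge e of S exactly when F(v) \<le> e, so
  the coalescent histories are the monotone maps h on {1..n-1} with F(v) \<le> h(v) \<le> n-1.
  Disjoint NNI moves give F(v) = v + [v is a roadblock], so the histories are the monotone maps
  with v \<le> h(v) that never fix a roadblock.  Monotone maps with v \<le> h(v) \<le> b on (a, b] are
  counted by C_(b-a) (via ballot numbers), and a prescribed set of fixed points x_1 < ... < x_l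
  cuts such a map into independent blocks, which gives the product
  C_(x_1) C_(x_2-x_1) ... C_(n-1-x_l).  Inclusion-exclusion over the fixed roadblocks finishes
  the count.\<close>

section \<open>Monotone maps above the identity\<close>

definition mono_dominating :: "nat \<Rightarrow> nat \<Rightarrow> nat \<Rightarrow> (nat \<Rightarrow> nat) set" where
  "mono_dominating a b c = {h \<in> extensional {a<..b}.
     (\<forall>v\<in>{a<..b}. v \<le> h v \<and> h v \<le> c) \<and> mono_on {a<..b} h}"

lemma finite_mono_dominating: "finite (mono_dominating a b c)"
proof (rule finite_subset)
  show "mono_dominating a b c \<subseteq> {a<..b} \<rightarrow>\<^sub>E {0..c}"
    unfolding mono_dominating_def by (auto simp: PiE_iff extensional_def)
qed (simp add: finite_PiE)

lemma mono_dominating_empty: "mono_dominating a a c = {\<lambda>_. undefined}"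
  unfolding mono_dominating_def by (auto simp: mono_on_def)

lemma bij_betw_mono_dominating_top:
  assumes "a \<le> b" "Suc b \<le> c"
  shows "bij_betw (\<lambda>h. h(Suc b := c)) (mono_dominating a b c)
           {h \<in> mono_dominating a (Suc b) c. h (Suc b) = c}"
proof (rule bij_betw_byWitness[where f' = "\<lambda>h. h(Suc b := undefined)"])
  show "\<forall>h\<in>mono_dominating a b c. (h(Suc b := c))(Suc b := undefined) = h"
    by (auto simp: mono_dominating_def extensional_def fun_eq_iff)
  show "\<forall>h\<in>{h \<in> mono_dominating a (Suc b) c. h (Suc b) = c}. (h(Suc b := undefined))(Suc b := c) = h"
    by auto
  show "(\<lambda>h. h(Suc b := c)) ` mono_dominating a b c \<subseteq> {h \<in> mono_dominating a (Suc b) c. h (Suc b) = c}"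
    using assms by (auto simp: mono_dominating_def extensional_def mono_on_def)
  show "(\<lambda>h. h(Suc b := undefined)) ` {h \<in> mono_dominating a (Suc b) c. h (Suc b) = c} \<subseteq> mono_dominating a b c"
    by (auto simp: mono_dominating_def extensional_def mono_on_def)
qed

lemma mono_dominating_top_less:
  assumes "a \<le> b" "Suc b \<le> c"
  shows "{h \<in> mono_dominating a (Suc b) (Suc c). h (Suc b) \<noteq> Suc c} = mono_dominating a (Suc b) c"
proof -
  have "h v \<le> c"
    if "h \<in> mono_dominating a (Suc b) (Suc c)" "h (Suc b) \<noteq> Suc c" "v \<in> {a<..Suc b}" for h v
  proof -
    have "h v \<le> h (Suc b)" "h (Suc b) \<le> Suc c"
      using that assms by (auto simp: mono_dominating_def mono_on_def)
    then show ?thesis using that(2) by linarith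
  qed
  moreover have "h (Suc b) \<le> c" if "h \<in> mono_dominating a (Suc b) c" for h
    using that assms by (auto simp: mono_dominating_def)
  ultimately show ?thesis
    unfolding mono_dominating_def by fastforce
qed

lemma card_mono_dominating_Suc:
  assumes "a \<le> b" "Suc b \<le> c"
  shows "card (mono_dominating a (Suc b) (Suc c))
       = card (mono_dominating a (Suc b) c) + card (mono_dominating a b (Suc c))"
proof -
  let ?M = "mono_dominating a (Suc b) (Suc c)"
  have "?M = {h \<in> ?M. h (Suc b) \<noteq> Suc c} \<union> {h \<in> ?M. h (Suc b) = Suc c}"
    by blast
  then have "card ?M = card {h \<in> ?M. h (Suc b) \<noteq> Suc c} + card {h \<in> ?M. h (Suc b) = Suc c}"
    by (metis (no_types, lifting) card_Un_disjoint disjoint_iff finite_Un finite_mono_dominating mem_Collect_eq)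
  then show ?thesis
    using mono_dominating_top_less[OF assms] bij_betw_same_card[OF bij_betw_mono_dominating_top] assms
    by simp
qed

lemma card_mono_dominating_diag:
  assumes "a \<le> b"
  shows "card (mono_dominating a (Suc b) (Suc b)) = card (mono_dominating a b (Suc b))"
proof -
  have "h (Suc b) = Suc b" if "h \<in> mono_dominating a (Suc b) (Suc b)" for h
    using that assms by (auto simp: mono_dominating_def intro: antisym)
  then have "{h \<in> mono_dominating a (Suc b) (Suc b). h (Suc b) = Suc b} = mono_dominating a (Suc b) (Suc b)"
    by blast
  then show ?thesis
    using bij_betw_same_card[OF bij_betw_mono_dominating_top, of a b "Suc b"] assms by simp
qed

definition ballot :: "nat \<Rightarrow> nat \<Rightarrow> int" where
  "ballot m c = int ((c + m) choose m) - int ((c + m) choose Suc c)"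

lemma ballot_Suc_Suc: "ballot (Suc d) (Suc c) = ballot (Suc d) c + ballot d (Suc c)"
  by (simp add: ballot_def)

lemma ballot_diag_Suc: "ballot (Suc d) (Suc d) = ballot d (Suc d)"
  by (simp add: ballot_def)

lemma ballot_diag: "ballot m m = catalan m"
proof -
  have "Suc m * ((2 * m) choose Suc m) = m * ((2 * m) choose m)"
  proof (cases m)
    case (Suc m')
    then show ?thesis using Suc_times_binomial_add[of m m'] by (simp add: mult_2)
  qed simp
  then have "(real m + 1) * real ((2 * m) choose Suc m) = real m * real ((2 * m) choose m)"
    by (metis of_nat_Suc of_nat_mult add.commute)
  then have "real ((2 * m) choose m) - real ((2 * m) choose Suc m) = real ((2 * m) choose m) / (real m + 1)"
    by (simp add: field_simps)
  then show ?thesis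
    by (simp add: ballot_def catalan_def mult_2)
qed

lemma card_mono_dominating_ballot:
  "int (card (mono_dominating a (a + d) (a + d + e))) = ballot d (d + e)"
proof (induction d arbitrary: e)
  case 0
  then show ?case by (simp add: mono_dominating_empty ballot_def)
next
  case (Suc d)
  note IH_d = Suc.IH
  show ?case
  proof (induction e)
    case 0
    have "card (mono_dominating a (a + Suc d) (a + Suc d + 0)) = card (mono_dominating a (a + d) (a + d + 1))"
      using card_mono_dominating_diag[of a "a + d"] by simp
    then show ?case
      using IH_d[of 1] ballot_diag_Suc[of d] by simp
  next
    case (Suc e)
    have "card (mono_dominating a (a + Suc d) (a + Suc d + Suc e)) =
        card (mono_dominating a (a + Suc d) (a + Suc d + e)) + card (mono_dominating a (a + d) (a + d + Suc (Suc e)))"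
      using card_mono_dominating_Suc[of a "a + d" "a + d + Suc e"] by simp
    then show ?case
      using Suc.IH IH_d[of "Suc (Suc e)"]
        ballot_Suc_Suc[of d "Suc d + e"]
      by simp
  qed
qed

lemma card_mono_dominating_catalan: "card (mono_dominating a b b) = catalan (b - a)"
proof (cases "a \<le> b")
  case True
  then obtain d where "b = a + d" using le_Suc_ex by blast
  then show ?thesis
    using card_mono_dominating_ballot[of a d 0] ballot_diag[of d] by simp
next
  case False
  then have "mono_dominating a b b = {\<lambda>_. undefined}"
    by (auto simp: mono_dominating_def mono_on_def)
  then show ?thesis using False by (simp add: catalan_def)
qed

lemma restrict_mono_dominating_left:
  assumes "h \<in> mono_dominating a b c" "h x = x" "x \<le> b"
  shows "restrict h {a<..x} \<in> mono_dominating a x x"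
proof -
  have "h v \<le> x" if "v \<in> {a<..x}" for v
    using assms that mono_onD[of "{a<..b}" h v x] unfolding mono_dominating_def by auto
  then show ?thesis
    using assms unfolding mono_dominating_def mono_on_def by auto
qed

lemma restrict_mono_dominating_right:
  assumes "h \<in> mono_dominating a b c" "a \<le> x"
  shows "restrict h {x<..b} \<in> mono_dominating x b c"
  using assms unfolding mono_dominating_def mono_on_def by auto

lemma glue_mono_dominating:
  assumes h1: "h1 \<in> mono_dominating a x x" and h2: "h2 \<in> mono_dominating x b b"
    and "a \<le> x" "x \<le> b"
  shows "(\<lambda>v. if v \<in> {a<..x} then h1 v else h2 v) \<in> mono_dominating a b b"
    (is "?h \<in> _")
proof -
  have bounds1: "v \<le> h1 v" "h1 v \<le> x" if "v \<in> {a<..x}" for v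
    using h1 that unfolding mono_dominating_def by auto
  have bounds2: "v \<le> h2 v" "h2 v \<le> b" if "v \<in> {x<..b}" for v
    using h2 that unfolding mono_dominating_def by auto
  have "?h v1 \<le> ?h v2" if "v1 \<in> {a<..b}" "v2 \<in> {a<..b}" "v1 \<le> v2" for v1 v2
  proof (cases "v2 \<le> x")
    case True
    then show ?thesis
      using h1 that unfolding mono_dominating_def by (auto simp: mono_on_def)
  next
    case v2_right: False
    show ?thesis
    proof (cases "v1 \<le> x")
      case True
      then have "h1 v1 \<le> x" "v2 \<le> h2 v2"
        using bounds1[of v1] bounds2[of v2] that v2_right by auto
      then show ?thesis using True v2_right that(1) by auto
    next
      case False
      then show ?thesis
        using h2 that unfolding mono_dominating_def by (auto simp: mono_on_def)
    qed
  qed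
  moreover have "?h \<in> extensional {a<..b}"
    using h1 h2 \<open>a \<le> x\<close> \<open>x \<le> b\<close> unfolding mono_dominating_def extensional_def by auto
  moreover have "v \<le> ?h v \<and> ?h v \<le> b" if "v \<in> {a<..b}" for v
    using bounds1[of v] bounds2[of v] that \<open>x \<le> b\<close> by auto
  ultimately show ?thesis
    unfolding mono_dominating_def mono_on_def by blast
qed

lemma bij_betw_mono_dominating_split:
  assumes "a < x" "x \<le> b" "Y \<subseteq> {x<..b}"
  shows "bij_betw (\<lambda>h. (restrict h {a<..x}, restrict h {x<..b}))
           {h \<in> mono_dominating a b b. \<forall>y\<in>insert x Y. h y = y}
           (mono_dominating a x x \<times> {h \<in> mono_dominating x b b. \<forall>y\<in>Y. h y = y})"
proof (rule bij_betw_byWitness[where f' = "\<lambda>(h1, h2) v. if v \<in> {a<..x} then h1 v else h2 v"])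
  show "\<forall>h\<in>{h \<in> mono_dominating a b b. \<forall>y\<in>insert x Y. h y = y}.
      (\<lambda>(h1, h2) v. if v \<in> {a<..x} then h1 v else h2 v) (restrict h {a<..x}, restrict h {x<..b}) = h"
    using assms by (auto simp: mono_dominating_def extensional_def fun_eq_iff)
  show "\<forall>p\<in>mono_dominating a x x \<times> {h \<in> mono_dominating x b b. \<forall>y\<in>Y. h y = y}.
      (\<lambda>h. (restrict h {a<..x}, restrict h {x<..b})) ((\<lambda>(h1, h2) v. if v \<in> {a<..x} then h1 v else h2 v) p) = p"
    using assms by (auto simp: mono_dominating_def extensional_def fun_eq_iff)
  show "(\<lambda>h. (restrict h {a<..x}, restrict h {x<..b})) ` {h \<in> mono_dominating a b b. \<forall>y\<in>insert x Y. h y = y}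
      \<subseteq> mono_dominating a x x \<times> {h \<in> mono_dominating x b b. \<forall>y\<in>Y. h y = y}"
    using assms restrict_mono_dominating_left restrict_mono_dominating_right by fastforce
  have "h1 x = x" if "h1 \<in> mono_dominating a x x" for h1
    using that assms by (auto simp: mono_dominating_def intro: antisym)
  then show "(\<lambda>(h1, h2) v. if v \<in> {a<..x} then h1 v else h2 v) `
      (mono_dominating a x x \<times> {h \<in> mono_dominating x b b. \<forall>y\<in>Y. h y = y})
      \<subseteq> {h \<in> mono_dominating a b b. \<forall>y\<in>insert x Y. h y = y}"
    using assms glue_mono_dominating by fastforce
qed

fun catalan_chain :: "nat \<Rightarrow> nat \<Rightarrow> nat list \<Rightarrow> real" where
  "catalan_chain a b [] = catalan (b - a)"
| "catalan_chain a b (x # xs) = catalan (x - a) * catalan_chain x b xs"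

lemma card_mono_dominating_fixing:
  assumes "sorted_wrt (<) xs" "set xs \<subseteq> {a<..b}"
  shows "card {h \<in> mono_dominating a b b. \<forall>x\<in>set xs. h x = x} = catalan_chain a b xs"
  using assms
proof (induction xs arbitrary: a)
  case Nil
  then show ?case using card_mono_dominating_catalan[of a b] by simp
next
  case (Cons x xs)
  then have "a < x" "x \<le> b" "set xs \<subseteq> {x<..b}" by auto
  then have "card {h \<in> mono_dominating a b b. \<forall>y\<in>set (x # xs). h y = y}
      = card (mono_dominating a x x) * card {h \<in> mono_dominating x b b. \<forall>y\<in>set xs. h y = y}"
    using bij_betw_same_card[OF bij_betw_mono_dominating_split] by (simp add: card_cartesian_product)
  then show ?case
    using Cons \<open>set xs \<subseteq> {x<..b}\<close> card_mono_dominating_catalan[of a x] by simp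
qed

lemma card_mono_dominating_fixing_image:
  fixes i :: "nat \<Rightarrow> nat"
  assumes mono: "strict_mono_on {1..k} i" and range: "i ` {1..k} \<subseteq> {a<..b}" and "J \<subseteq> {1..k}"
  shows "card {h \<in> mono_dominating a b b. \<forall>j\<in>J. h (i j) = i j}
       = catalan_chain a b (map i (sorted_list_of_set J))"
proof -
  let ?xs = "map i (sorted_list_of_set J)"
  have fin: "finite J" by (rule finite_subset[OF assms(3)]) simp
  have "sorted_wrt (<) ?xs"
    unfolding sorted_wrt_map
    by (rule sorted_wrt_mono_rel[OF _ strict_sorted_list_of_set])
      (use fin assms(3) in \<open>auto intro!: strict_mono_onD[OF mono]\<close>)
  moreover have "set ?xs \<subseteq> {a<..b}"
    using fin assms(3) range by auto
  moreover have "{h \<in> mono_dominating a b b. \<forall>j\<in>J. h (i j) = i j}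
      = {h \<in> mono_dominating a b b. \<forall>x\<in>set ?xs. h x = x}"
    using fin by auto
  ultimately show ?thesis by (simp only: card_mono_dominating_fixing)
qed

lemma chain_prod_eq_catalan_chain: "chain_prod n xs = catalan_chain 0 (n - 1) xs"
proof -
  have "(\<Prod>t<length xs + 1. catalan ((a # xs @ [b]) ! (t + 1) - (a # xs @ [b]) ! t))
      = catalan_chain a b xs" for a b
  proof (induction xs arbitrary: a)
    case (Cons x xs)
    then show ?case
      by (simp only: length_Cons add_Suc prod.lessThan_Suc_shift) simp
  qed simp
  then show ?thesis unfolding chain_prod_def Let_def .
qed

section \<open>Inclusion-exclusion over fixed points\<close>

lemma sorted_list_of_set_nth_enumerates:
  assumes "finite R" "card R = k"
  shows "strict_mono_on {1..k} (\<lambda>a. sorted_list_of_set R ! (a - 1))"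
    and "(\<lambda>a. sorted_list_of_set R ! (a - 1)) ` {1..k} = R"
proof -
  let ?xs = "sorted_list_of_set R"
  have len: "length ?xs = k" using assms by simp
  show "strict_mono_on {1..k} (\<lambda>a. ?xs ! (a - 1))"
  proof (rule strict_mono_onI)
    fix a b assume "a \<in> {1..k}" "b \<in> {1..k}" "a < b"
    then show "?xs ! (a - 1) < ?xs ! (b - 1)"
      using sorted_wrt_nth_less[OF strict_sorted_list_of_set, of "a - 1" "b - 1" R] len by auto
  qed
  have "(\<lambda>a. ?xs ! (a - 1)) ` {1..k} = (\<lambda>a. ?xs ! (a - 1)) ` Suc ` {..<k}"
    by (simp only: image_Suc_lessThan)
  also have "\<dots> = set ?xs"
    using len by (auto simp: image_image set_conv_nth)
  finally show "(\<lambda>a. ?xs ! (a - 1)) ` {1..k} = R" using assms(1) by simp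
qed

lemma card_Diff_UNION_inclusion_exclusion:
  fixes A :: "'i \<Rightarrow> 'a set"
  assumes "finite U" "finite I"
  shows "(of_nat (card (U - (\<Union>a\<in>I. A a))) :: 'r::ring_1)
       = (\<Sum>J\<in>Pow I. (-1) ^ card J * of_nat (card (U \<inter> \<Inter> (A ` J))))"
proof -
  interpret Incl_Excl finite "\<lambda>S. of_nat (card S) :: 'r"
    by unfold_locales (auto simp: card_Un_disjnt)
  let ?V = "\<Union>a\<in>I. U \<inter> A a"
  let ?t = "\<lambda>J. (-1) ^ card J * (of_nat (card (U \<inter> \<Inter> (A ` J))) :: 'r)"
  have "U - (\<Union>a\<in>I. A a) = U - ?V" "?V \<subseteq> U" by blast+
  then have "(of_nat (card (U - (\<Union>a\<in>I. A a))) :: 'r) = of_nat (card U) - of_nat (card ?V)"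
    using assms(1) by (simp add: card_Diff_subset finite_subset card_mono of_nat_diff)
  also have "(of_nat (card ?V) :: 'r) =
      (\<Sum>J | J \<subseteq> I \<and> J \<noteq> {}. (-1) ^ (card J + 1) * of_nat (card (\<Inter>b\<in>J. U \<inter> A b)))"
    by (rule restricted_indexed) (use assms in auto)
  also have "\<dots> = (\<Sum>J | J \<subseteq> I \<and> J \<noteq> {}. - ?t J)"
  proof (rule sum.cong[OF refl])
    fix J assume "J \<in> {J. J \<subseteq> I \<and> J \<noteq> {}}"
    then have "(\<Inter>b\<in>J. U \<inter> A b) = U \<inter> \<Inter> (A ` J)" by blast
    then show "(-1) ^ (card J + 1) * of_nat (card (\<Inter>b\<in>J. U \<inter> A b)) = - ?t J" by simp
  qed
  also have "of_nat (card U) - (\<Sum>J | J \<subseteq> I \<and> J \<noteq> {}. - ?t J) = ?t {} + (\<Sum>J | J \<subseteq> I \<and> J \<noteq> {}. ?t J)"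
    by (simp add: sum_negf)
  also have "\<dots> = (\<Sum>J\<in>Pow I. ?t J)"
  proof -
    have "Pow I = insert {} {J. J \<subseteq> I \<and> J \<noteq> {}}" by blast
    then show ?thesis using assms(2) by simp
  qed
  finally show ?thesis .
qed

lemma sum_Pow_by_card:
  assumes "finite I"
  shows "(\<Sum>J\<in>Pow I. f J) = (\<Sum>l = 0..card I. \<Sum>J \<in> {J. J \<subseteq> I \<and> card J = l}. f J)"
proof -
  have "card ` Pow I \<subseteq> {0..card I}"
    using assms by (auto simp: card_mono)
  then show ?thesis
    using sum.group[of "Pow I" "{0..card I}" card f] assms by simp
qed

lemma card_mono_dominating_avoiding:
  fixes i :: "nat \<Rightarrow> nat"
  assumes mono: "strict_mono_on {1..k} i" and range: "i ` {1..k} \<subseteq> {0<..n - 1}"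
  shows "card {h \<in> mono_dominating 0 (n - 1) (n - 1). \<forall>a\<in>{1..k}. h (i a) \<noteq> i a} =
     catalan (n - 1) + (\<Sum>l = 1..k. (-1) ^ l *
        (\<Sum>J \<in> {J. J \<subseteq> {1..k} \<and> card J = l}. chain_prod n (map i (sorted_list_of_set J))))"
proof -
  let ?U = "mono_dominating 0 (n - 1) (n - 1)"
  define f where "f J = chain_prod n (map i (sorted_list_of_set J))" for J
  have fixing: "card (?U \<inter> (\<Inter>a\<in>J. {h. h (i a) = i a})) = f J" if "J \<subseteq> {1..k}" for J
  proof -
    have "?U \<inter> (\<Inter>a\<in>J. {h. h (i a) = i a}) = {h \<in> ?U. \<forall>a\<in>J. h (i a) = i a}" by blast
    then show ?thesis
      using card_mono_dominating_fixing_image[OF mono range that]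
      unfolding f_def chain_prod_eq_catalan_chain by (simp only:)
  qed
  have "{h \<in> ?U. \<forall>a\<in>{1..k}. h (i a) \<noteq> i a} = ?U - (\<Union>a\<in>{1..k}. {h. h (i a) = i a})"
    by blast
  also have "real (card \<dots>)
      = (\<Sum>J\<in>Pow {1..k}. (-1) ^ card J * real (card (?U \<inter> (\<Inter>a\<in>J. {h. h (i a) = i a}))))"
    by (rule card_Diff_UNION_inclusion_exclusion[OF finite_mono_dominating finite_atLeastAtMost])
  also have "\<dots> = (\<Sum>J\<in>Pow {1..k}. (-1) ^ card J * f J)"
    by (intro sum.cong refl) (simp only: Pow_iff fixing)
  also have "\<dots> = (\<Sum>l = 0..k. \<Sum>J \<in> {J. J \<subseteq> {1..k} \<and> card J = l}. (-1) ^ card J * f J)"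
    using sum_Pow_by_card[of "{1..k}" "\<lambda>J. (-1) ^ card J * f J"]
    by (simp only: finite_atLeastAtMost card_atLeastAtMost diff_Suc_1)
  also have "\<dots> = (\<Sum>l = 0..k. (-1) ^ l * (\<Sum>J \<in> {J. J \<subseteq> {1..k} \<and> card J = l}. f J))"
    by (simp add: sum_distrib_left)
  also have "\<dots> = catalan (n - 1) + (\<Sum>l = 1..k. (-1) ^ l * (\<Sum>J \<in> {J. J \<subseteq> {1..k} \<and> card J = l}. f J))"
  proof -
    have "{J. J \<subseteq> {1..k} \<and> card J = 0} = {{}}"
      using finite_subset by fastforce
    then show ?thesis
      by (simp add: sum.atLeast_Suc_atMost f_def chain_prod_eq_catalan_chain)
  qed
  finally show ?thesis unfolding f_def .
qed

section \<open>Coalescent histories of caterpillars\<close>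

lemma sigma_nth:
  assumes "distinct s" "p < length s"
  shows "sigma s (s ! p) = Suc p"
  unfolding sigma_def
proof (rule the_equality)
  fix q assume "1 \<le> q \<and> q \<le> length s \<and> s ! (q - 1) = s ! p"
  then show "q = Suc p"
    using assms nth_eq_iff_index_eq[of s "q - 1" p] by auto
qed (use assms in auto)

lemma in_set_take_iff_sigma_le:
  assumes "distinct s" "x \<in> set s"
  shows "x \<in> set (take m s) \<longleftrightarrow> sigma s x \<le> m"
proof -
  obtain p where p: "p < length s" "x = s ! p" using assms(2) by (auto simp: in_set_conv_nth)
  have "x \<in> set (take m s) \<longleftrightarrow> p < m"
    using assms(1) p by (auto simp: in_set_conv_nth nth_eq_iff_index_eq)
  then show ?thesis using sigma_nth[OF assms(1) p(1)] p(2) by (simp add: Suc_le_eq)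
qed

lemma cat_below_subset_iff_Fmax:
  assumes "distinct s" "set g \<subseteq> set s" "g \<noteq> []"
  shows "cat_below g v \<subseteq> cat_below s e \<longleftrightarrow> Fmax g s v \<le> e"
proof -
  let ?X = "set (take (v + 1) g)"
  have X: "finite ?X" "?X \<noteq> {}" "?X \<subseteq> set s"
    using assms(2,3) set_take_subset[of "v + 1" g] by (auto simp: neq_Nil_conv)
  have "?X \<subseteq> set (take (e + 1) s) \<longleftrightarrow> (\<forall>x\<in>?X. sigma s x \<le> e + 1)"
    using X(3) in_set_take_iff_sigma_le[OF assms(1)] by blast
  also have "\<dots> \<longleftrightarrow> Max (sigma s ` ?X) \<le> e + 1"
    using X by simp
  finally show ?thesis
    unfolding cat_below_def Fmax_def by linarith
qed

lemma coal_hist_caterpillar: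
  assumes "distinct s" "set g \<subseteq> set s" "g \<noteq> []"
  shows "coal_hist g s = {h \<in> {1..<length s} \<rightarrow>\<^sub>E {1..<length s}.
     (\<forall>v\<in>{1..<length s}. Fmax g s v \<le> h v) \<and> mono_on {1..<length s} h}"
  unfolding coal_hist_def cat_below_subset_iff_Fmax[OF assms] mono_on_def by blast

section \<open>Disjoint NNI moves\<close>

text \<open>A pair Q of exchanged positions creates the roadblock at j = Max Q - 2: the first j + 1
  labels of G already contain the label at position Max Q of S.\<close>
definition nni_roadblocks :: "nat set set \<Rightarrow> nat set" where
  "nni_roadblocks P = (\<lambda>Q. Max Q - 2) ` P"

lemma swap_pos_outside: "\<forall>Q\<in>P. p \<notin> Q \<Longrightarrow> swap_pos P p = p"
  unfolding swap_pos_def by auto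

context
  fixes n :: nat and P :: "nat set set"
  assumes n3: "n \<ge> 3" and valid: "valid_nni_pairs n P"
begin

lemma nni_pairE:
  assumes "Q \<in> P"
  obtains a b where "Q = {a, b}" "1 \<le> a" "a < b" "b \<le> n" "b = a + 1 \<and> 2 \<le> a \<or> a = 1 \<and> b = 3"
proof -
  have "(\<exists>m. 2 \<le> m \<and> m \<le> n - 1 \<and> Q = {m, m + 1}) \<or> Q = {1, 3}"
    using valid assms unfolding valid_nni_pairs_def by blast
  then show ?thesis
    using that n3 by (elim disjE exE conjE) auto
qed

lemma nni_pairs_eq: "Q1 \<in> P \<Longrightarrow> Q2 \<in> P \<Longrightarrow> x \<in> Q1 \<Longrightarrow> x \<in> Q2 \<Longrightarrow> Q1 = Q2"
  using valid unfolding valid_nni_pairs_def by blast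

lemma swap_pos_partner:
  assumes "Q \<in> P" "p \<in> Q" "q \<in> Q" "p \<noteq> q"
  shows "swap_pos P p = q"
proof -
  obtain a b where "Q = {a, b}" using nni_pairE[OF assms(1)] by blast
  then have Q: "Q = {p, q}" using assms(2-4) by auto
  have "(THE q. \<exists>Q\<in>P. Q = {p, q} \<and> q \<noteq> p) = q"
  proof (rule the_equality)
    fix q' assume "\<exists>Q'\<in>P. Q' = {p, q'} \<and> q' \<noteq> p"
    then obtain Q' where "Q' \<in> P" "Q' = {p, q'}" "q' \<noteq> p" by blast
    moreover have "Q' = Q"
      using nni_pairs_eq[OF \<open>Q' \<in> P\<close> assms(1), of p] \<open>Q' = {p, q'}\<close> assms(2) by blast
    ultimately show "q' = q" using Q by (metis doubleton_eq_iff)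
  qed (use assms Q in auto)
  then show ?thesis unfolding swap_pos_def using assms by auto
qed

lemma swap_posE:
  obtains "\<forall>Q\<in>P. p \<notin> Q" "swap_pos P p = p"
  | a b where "{a, b} \<in> P" "1 \<le> a" "a < b" "b \<le> n" "b = a + 1 \<and> 2 \<le> a \<or> a = 1 \<and> b = 3"
      "p = a \<and> swap_pos P p = b \<or> p = b \<and> swap_pos P p = a"
proof (cases "\<exists>Q\<in>P. p \<in> Q")
  case True
  then obtain Q where Q: "Q \<in> P" "p \<in> Q" by blast
  obtain a b where ab: "Q = {a, b}" "1 \<le> a" "a < b" "b \<le> n" "b = a + 1 \<and> 2 \<le> a \<or> a = 1 \<and> b = 3"
    using nni_pairE[OF Q(1)] by blast
  have "p = a \<and> swap_pos P p = b \<or> p = b \<and> swap_pos P p = a"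
    using Q ab swap_pos_partner[OF Q(1), of p] by fastforce
  then show ?thesis using that(2) Q(1) ab by blast
next
  case False
  then show ?thesis using that(1) swap_pos_outside by blast
qed

lemma swap_pos_range: "p \<in> {1..n} \<Longrightarrow> swap_pos P p \<in> {1..n}"
  by (cases rule: swap_posE[of p]) auto

lemma swap_pos_swap_pos: "swap_pos P (swap_pos P p) = p"
proof (cases rule: swap_posE[of p])
  case (2 a b)
  then have "swap_pos P a = b" "swap_pos P b = a"
    using swap_pos_partner[OF 2(1)] by auto
  then show ?thesis using 2(6) by auto
qed simp

lemma inj_swap_pos: "inj (swap_pos P)"
  by (metis injI swap_pos_swap_pos)

lemma swap_pos_le: "1 \<le> p \<Longrightarrow> swap_pos P p \<le> max (p + 1) 3"
  by (cases rule: swap_posE[of p]) auto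

lemma Max_nni_pair:
  assumes "Q \<in> P"
  shows "Max Q \<in> Q" "3 \<le> Max Q" "Max Q \<le> n"
proof -
  obtain a b where "Q = {a, b}" "a < b" "b \<le> n" "b = a + 1 \<and> 2 \<le> a \<or> a = 1 \<and> b = 3"
    using nni_pairE[OF assms] by metis
  then show "Max Q \<in> Q" "3 \<le> Max Q" "Max Q \<le> n" by (auto simp: max_def)
qed

lemma nni_roadblocks_subset: "nni_roadblocks P \<subseteq> {1..n - 2}"
proof
  fix j assume "j \<in> nni_roadblocks P"
  then obtain Q where "Q \<in> P" "j = Max Q - 2" unfolding nni_roadblocks_def by blast
  then show "j \<in> {1..n - 2}" using Max_nni_pair[of Q] by auto
qed

lemma card_nni_roadblocks: "card (nni_roadblocks P) = card P"
proof -
  have "Q1 = Q2" if "Q1 \<in> P" "Q2 \<in> P" "Max Q1 - 2 = Max Q2 - 2" for Q1 Q2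
  proof -
    have "Max Q1 = Max Q2"
      using that(3) Max_nni_pair[OF that(1)] Max_nni_pair[OF that(2)] by linarith
    then have "Max Q1 \<in> Q1 \<inter> Q2"
      using Max_nni_pair[OF that(1)] Max_nni_pair[OF that(2)] by simp
    then show ?thesis using nni_pairs_eq[OF that(1,2)] by blast
  qed
  then show ?thesis
    unfolding nni_roadblocks_def by (intro card_image inj_onI) auto
qed

lemma swap_pos_image_reaches_iff:
  "j + 2 \<in> swap_pos P ` {1..j + 1} \<longleftrightarrow> j \<in> nni_roadblocks P"
proof
  assume "j + 2 \<in> swap_pos P ` {1..j + 1}"
  then obtain p where p: "p \<le> j + 1" "swap_pos P p = j + 2" by auto
  then show "j \<in> nni_roadblocks P"
  proof (cases rule: swap_posE[of p])
    case (2 a b)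
    then have "b = j + 2" using p by auto
    moreover have "Max {a, b} = b" using \<open>a < b\<close> by simp
    ultimately have "j = Max {a, b} - 2" by simp
    then show ?thesis unfolding nni_roadblocks_def using \<open>{a, b} \<in> P\<close> by blast
  qed simp
next
  assume "j \<in> nni_roadblocks P"
  then obtain Q where Q: "Q \<in> P" "j = Max Q - 2" unfolding nni_roadblocks_def by blast
  obtain a b where ab: "Q = {a, b}" "1 \<le> a" "a < b"
    using nni_pairE[OF Q(1)] by blast
  have "b = j + 2" using Q ab Max_nni_pair[OF Q(1)] by simp
  moreover have "swap_pos P a = b" using swap_pos_partner[OF Q(1), of a b] ab by simp
  ultimately show "j + 2 \<in> swap_pos P ` {1..j + 1}" using ab by force
qed

lemma Max_swap_pos_image:
  assumes "1 \<le> j" "j \<le> n - 1"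
  shows "Max (swap_pos P ` {1..j + 1}) = (if j \<in> nni_roadblocks P then j + 2 else j + 1)"
proof -
  let ?S = "swap_pos P ` {1..j + 1}"
  have sub: "?S \<subseteq> {1..j + 2}"
  proof
    fix q assume "q \<in> ?S"
    then obtain p where "p \<in> {1..j + 1}" "q = swap_pos P p" by blast
    then show "q \<in> {1..j + 2}" using swap_pos_range[of p] swap_pos_le[of p] assms by auto
  qed
  have card: "card ?S = j + 1"
    using inj_swap_pos by (simp add: card_image inj_on_subset)
  show ?thesis
  proof (cases "j \<in> nni_roadblocks P")
    case True
    then have "j + 2 \<in> ?S" using swap_pos_image_reaches_iff by blast
    then show ?thesis using sub True by (intro Max_eqI) auto
  next
    case False
    then have "j + 2 \<notin> ?S" using swap_pos_image_reaches_iff by blast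
    then have "?S \<subseteq> {1..j + 1}" using sub by force
    then have "?S = {1..j + 1}" using card by (intro card_subset_eq) auto
    moreover have "Max {1..j + 1} = j + 1" by (rule Max_eqI) auto
    ultimately show ?thesis using False by simp
  qed
qed

end

context
  fixes n :: nat and P :: "nat set set" and s :: "'a list"
  assumes n3: "n \<ge> 3" and valid: "valid_nni_pairs n P" and len: "length s = n" and dist: "distinct s"
begin

lemma sigma_image_take_apply_nni:
  assumes "j + 1 \<le> n"
  shows "sigma s ` set (take (j + 1) (apply_nni P s)) = swap_pos P ` {1..j + 1}"
proof -
  have "take (j + 1) (apply_nni P s) = map (\<lambda>i. s ! (swap_pos P (Suc i) - 1)) [0..<j + 1]"
    using assms len by (simp add: apply_nni_def take_map)
  then have "set (take (j + 1) (apply_nni P s)) = (\<lambda>p. s ! (swap_pos P p - 1)) ` Suc ` {..<j + 1}"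
    by (simp only: set_map set_upt image_image lessThan_atLeast0)
  also have "Suc ` {..<j + 1} = {1..j + 1}" by (rule image_Suc_lessThan)
  finally have take_eq: "set (take (j + 1) (apply_nni P s)) = (\<lambda>p. s ! (swap_pos P p - 1)) ` {1..j + 1}" .
  have "sigma s (s ! (swap_pos P p - 1)) = swap_pos P p" if "p \<in> {1..j + 1}" for p
  proof -
    have "swap_pos P p \<in> {1..n}" using swap_pos_range[OF n3 valid] that assms by simp
    then have "swap_pos P p - 1 < length s" "Suc (swap_pos P p - 1) = swap_pos P p" using len by auto
    then show ?thesis using sigma_nth[OF dist] by metis
  qed
  then show ?thesis
    unfolding take_eq image_image by (rule image_cong[OF refl])
qed

lemma Fmax_apply_nni:
  assumes "1 \<le> j" "j \<le> n - 1"
  shows "Fmax (apply_nni P s) s j = (if j \<in> nni_roadblocks P then j + 1 else j)"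
  unfolding Fmax_def using sigma_image_take_apply_nni Max_swap_pos_image[OF n3 valid] assms by auto

lemma set_apply_nni_subset: "set (apply_nni P s) \<subseteq> set s"
proof
  fix x assume "x \<in> set (apply_nni P s)"
  then obtain i where i: "i < n" "x = s ! (swap_pos P (i + 1) - 1)"
    using len by (auto simp: apply_nni_def)
  then have "swap_pos P (i + 1) \<in> {1..n}" using swap_pos_range[OF n3 valid] by simp
  then show "x \<in> set s" using i len by auto
qed

lemma roadblock_apply_nni: "roadblock (apply_nni P s) s = (\<lambda>j. (j, j)) ` nni_roadblocks P"
proof safe
  fix i j assume "(i, j) \<in> roadblock (apply_nni P s) s"
  then have ij: "1 \<le> j" "j \<le> i" "i \<le> n - 1" "i < Fmax (apply_nni P s) s j"
    unfolding roadblock_def using len by auto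
  then have "i < (if j \<in> nni_roadblocks P then j + 1 else j)"
    using Fmax_apply_nni[of j] by simp
  then have "j \<in> nni_roadblocks P" "i = j"
    using ij(2) by (auto split: if_splits)
  then show "(i, j) \<in> (\<lambda>j. (j, j)) ` nni_roadblocks P" by blast
next
  fix j assume j: "j \<in> nni_roadblocks P"
  then have "j \<in> {1..n - 2}" using nni_roadblocks_subset[OF n3 valid] by blast
  then have "1 \<le> j" "j \<le> n - 1" by auto
  then have "Fmax (apply_nni P s) s j = j + 1" using Fmax_apply_nni j by simp
  then show "(j, j) \<in> roadblock (apply_nni P s) s"
    unfolding roadblock_def using len \<open>1 \<le> j\<close> \<open>j \<le> n - 1\<close> by simp
qed

lemma coal_hist_apply_nni:
  "coal_hist (apply_nni P s) s = {h \<in> mono_dominating 0 (n - 1) (n - 1). \<forall>j\<in>nni_roadblocks P. h j \<noteq> j}"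
proof -
  let ?D = "{0<..n - 1}" and ?R = "nni_roadblocks P"
  have D: "{1..<length s} = ?D" using len by auto
  have R: "?R \<subseteq> ?D" by (rule order_trans[OF nni_roadblocks_subset[OF n3 valid]]) auto
  have pointwise: "Fmax (apply_nni P s) s v \<le> h v \<and> h v \<in> ?D \<longleftrightarrow>
      v \<le> h v \<and> h v \<le> n - 1 \<and> (v \<in> ?R \<longrightarrow> h v \<noteq> v)" if "v \<in> ?D" for h v
    using Fmax_apply_nni[of v] that by auto
  have nonempty: "apply_nni P s \<noteq> []" using len n3 unfolding apply_nni_def by auto
  have "coal_hist (apply_nni P s) s = {h \<in> extensional ?D.
      (\<forall>v\<in>?D. Fmax (apply_nni P s) s v \<le> h v \<and> h v \<in> ?D) \<and> mono_on ?D h}"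
    unfolding coal_hist_caterpillar[OF dist set_apply_nni_subset nonempty] D by (auto simp: PiE_iff)
  also have "\<dots> = {h \<in> extensional ?D. (\<forall>v\<in>?D. v \<le> h v \<and> h v \<le> n - 1 \<and> (v \<in> ?R \<longrightarrow> h v \<noteq> v))
      \<and> mono_on ?D h}"
    using pointwise by simp
  also have "\<dots> = {h \<in> mono_dominating 0 (n - 1) (n - 1). \<forall>j\<in>?R. h j \<noteq> j}"
    unfolding mono_dominating_def using R by blast
  finally show ?thesis .
qed

end

theorem proposition6:
  fixes s :: "'a list" and n k :: nat and P :: "nat set set"
  assumes "n \<ge> 3" and "length s = n" and "distinct s"
    and "valid_nni_pairs n P" and "card P = k" and "k \<ge> 1"
  shows "\<exists>i :: nat \<Rightarrow> nat.
     (\<forall>a\<in>{1..k}. \<forall>b\<in>{1..k}. a < b \<longrightarrow> i a < i b) \<and> 0 < i 1 \<and> i k < n - 1 \<and>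
     roadblock (apply_nni P s) s = (\<lambda>j. (i j, i j)) ` {1..k} \<and>
     real (card (coal_hist (apply_nni P s) s)) =
       catalan (n - 1) +
       (\<Sum>l = 1..k. (-1) ^ l *
          (\<Sum>J \<in> {J. J \<subseteq> {1..k} \<and> card J = l}. chain_prod n (map i (sorted_list_of_set J))))"
proof -
  let ?R = "nni_roadblocks P"
  define i where "i a = sorted_list_of_set ?R ! (a - 1)" for a
  have R: "?R \<subseteq> {1..n - 2}" "card ?R = k"
    using nni_roadblocks_subset card_nni_roadblocks assms by auto
  then have mono: "strict_mono_on {1..k} i" and img: "i ` {1..k} = ?R"
    using sorted_list_of_set_nth_enumerates[OF finite_subset[OF R(1)]] unfolding i_def by auto
  have "\<forall>a\<in>{1..k}. \<forall>b\<in>{1..k}. a < b \<longrightarrow> i a < i b"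
    using mono by (auto dest: strict_mono_onD)
  moreover have "0 < i 1" "i k < n - 1"
    using img R(1) \<open>k \<ge> 1\<close> \<open>n \<ge> 3\<close> by force+
  moreover have "roadblock (apply_nni P s) s = (\<lambda>j. (i j, i j)) ` {1..k}"
    unfolding roadblock_apply_nni[OF assms(1,4,2,3)] img[symmetric] image_image ..
  moreover have "coal_hist (apply_nni P s) s =
      {h \<in> mono_dominating 0 (n - 1) (n - 1). \<forall>a\<in>{1..k}. h (i a) \<noteq> i a}"
    unfolding coal_hist_apply_nni[OF assms(1,4,2,3)] img[symmetric] by blast
  moreover have "i ` {1..k} \<subseteq> {0<..n - 1}"
  proof -
    have "{1..n - 2} \<subseteq> {0<..n - 1}" by auto
    then show ?thesis using img R(1) by blast
  qed
  ultimately show ?thesis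
    using card_mono_dominating_avoiding[OF mono] by (intro exI[of _ i]) simp
qed

end
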